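(* The Euler–Mascheroni constant $\gamma$ satisfies $$\gamma=1-\frac12\ln 2-\sum_{n=2}^{\infty}\left(\operatorname{arctanh}\!\left(\frac1n\right)-\frac1n\right).$$
   Context: $\gamma=\lim_{N\to\infty}\left(\sum_{n=1}^N\frac1n-\ln N\right)$ is the Euler–Mascheroni constant. *)

theory Defs
  imports "HOL-Analysis.Analysis"
begin

end

theory Submission
  imports Defs "HOL-Real_Asymp.Real_Asymp"
begin

text \<open>Since \<open>artanh (1/x) = (ln (x + 1) - ln (x - 1)) / 2\<close>, the sum of \<open>artanh (1/n)\<close> over
  \<open>2 \<le> n \<le> m + 1\<close> telescopes to \<open>(ln (m + 1) + ln (m + 2) - ln 2) / 2\<close>, while the sum of \<open>1/n\<close>
  over the same range is \<open>harm (m + 1) - 1\<close>. The partial sums of the series are therefore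
  \<open>1 - ln 2 / 2 - (harm (m + 1) - ln (m + 1)) + (ln (m + 2) - ln (m + 1)) / 2\<close>, which tend to
  \<open>1 - ln 2 / 2 - euler_mascheroni\<close>.\<close>

lemma artanh_inverse:
  fixes x :: real
  assumes "1 < x"
  shows "artanh (1 / x) = (ln (x + 1) - ln (x - 1)) / 2"
proof -
  have "(1 + 1 / x) / (1 - 1 / x) = (x + 1) / (x - 1)"
    using assms by (simp add: field_simps)
  then show ?thesis
    using assms by (simp add: artanh_def ln_div)
qed

lemma sum_artanh_inverse_telescope:
  "(\<Sum>n<m. artanh (1 / real (n + 2))) = (ln (real m + 1) + ln (real m + 2) - ln 2) / 2"
proof (induction m)
  case 0
  then show ?case by simp
next
  case (Suc m)
  have "artanh (1 / real (m + 2)) = (ln (real m + 3) - ln (real m + 1)) / 2"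
    using artanh_inverse[of "real (m + 2)"] by (simp add: add_ac)
  with Suc.IH show ?case
    by (simp add: field_simps)
qed

lemma sum_inverse_shift_harm:
  "(\<Sum>n<m. 1 / real (n + 2)) = harm (m + 1) - 1"
  by (induction m) (simp_all add: harm_def harm_Suc inverse_eq_divide add_ac)

lemma sums_artanh_inverse_minus_inverse:
  "(\<lambda>n. artanh (1 / real (n + 2)) - 1 / real (n + 2)) sums (1 - ln 2 / 2 - euler_mascheroni)"
proof -
  have harm_limit: "(\<lambda>m. harm (m + 1) - ln (real (m + 1)) :: real) \<longlonglongrightarrow> euler_mascheroni"
    using LIMSEQ_ignore_initial_segment[OF euler_mascheroni_LIMSEQ, of 1] by simp
  have ln_gap_limit: "(\<lambda>m::nat. (ln (real m + 2) - ln (real m + 1)) / 2) \<longlonglongrightarrow> 0"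
    by real_asymp
  have partial_sums: "(\<Sum>n<m. artanh (1 / real (n + 2)) - 1 / real (n + 2)) =
      1 - ln 2 / 2 - ((harm (m + 1) - ln (real (m + 1))) - (ln (real m + 2) - ln (real m + 1)) / 2)"
    for m
    unfolding sum_subtractf sum_artanh_inverse_telescope sum_inverse_shift_harm
    by (simp add: field_simps add_ac)
  have "(\<lambda>m. 1 - ln 2 / 2 - ((harm (m + 1) - ln (real (m + 1)))
      - (ln (real m + 2) - ln (real m + 1)) / 2)) \<longlonglongrightarrow> 1 - ln 2 / 2 - (euler_mascheroni - 0)"
    by (intro tendsto_intros harm_limit ln_gap_limit)
  then show ?thesis
    unfolding sums_def partial_sums by simp
qed

theorem corollary1p3:
  shows "summable (\<lambda>n::nat. artanh (1 / real (n + 2)) - 1 / real (n + 2)) \<and>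
    (euler_mascheroni :: real) =
      1 - ln 2 / 2 - (\<Sum>n. artanh (1 / real (n + 2)) - 1 / real (n + 2))"
  using sums_summable[OF sums_artanh_inverse_minus_inverse]
    sums_unique[OF sums_artanh_inverse_minus_inverse]
  by simp

end
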